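(* The abelian group $\ell^\infty(\mathbb{Z})_S$ is uniquely divisible, i.e. it admits a (unique) structure of a $\mathbb{Q}$-vector space.
   Context: $\ell^\infty(\mathbb{Z})$ denotes the abelian group of bounded integer-valued sequences $(a_j)_{j\in\mathbb{Z}}$, $S(a_j)_j=(a_{j+1})_j$ is the shift, and $\ell^\infty(\mathbb{Z})_S=\ell^\infty(\mathbb{Z})/\{a-Sa: a\in\ell^\infty(\mathbb{Z})\}$. *)

theory Defs
  imports Main
begin

definition linfty :: "(int \<Rightarrow> int) set" where
  "linfty = {a. \<exists>M. \<forall>j. \<bar>a j\<bar> \<le> M}"

definition shift :: "(int \<Rightarrow> int) \<Rightarrow> (int \<Rightarrow> int)" where
  "shift a = (\<lambda>j. a (j + 1))"

definition coboundaries :: "(int \<Rightarrow> int) set" where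
  "coboundaries = {(\<lambda>j. a j - shift a j) | a. a \<in> linfty}"

text \<open>Equality in the coinvariants (quotient group) linfty / coboundaries.\<close>
definition coinv_eq :: "(int \<Rightarrow> int) \<Rightarrow> (int \<Rightarrow> int) \<Rightarrow> bool" where
  "coinv_eq x y \<longleftrightarrow> (\<lambda>j. x j - y j) \<in> coboundaries"

definition coinv_uniquely_divisible :: bool where
  "coinv_uniquely_divisible \<longleftrightarrow>
     (\<forall>n::nat. n > 0 \<longrightarrow>
        (\<forall>x\<in>linfty. \<exists>y\<in>linfty. coinv_eq x (\<lambda>j. int n * y j)) \<and>
        (\<forall>y\<in>linfty. \<forall>z\<in>linfty.
            coinv_eq (\<lambda>j. int n * y j) (\<lambda>j. int n * z j) \<longrightarrow> coinv_eq y z))"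

end

theory Submission
  imports Defs
begin

text \<open>Every bounded x is a coboundary P - S P of a possibly unbounded primitive P. Dividing
  with remainder, P = n q + r with 0 \<le> r < n, so x \<equiv> n (q - S q) modulo the bounded coboundary
  r - S r, and q - S q is bounded because n (q - S q) = x - (r - S r) is. Conversely, if
  n (y - z) = b - S b with b bounded, then b is constant modulo n, so b - b 0 = n c with c
  bounded, and y - z = c - S c.\<close>

lemma coinv_eq_iff:
  "coinv_eq x y \<longleftrightarrow> (\<exists>a\<in>linfty. \<forall>j. x j - y j = a j - a (j + 1))"
  unfolding coinv_eq_def coboundaries_def shift_def by (auto simp: fun_eq_iff)

lemma linfty_if_abs_le: "(\<And>j. \<bar>a j\<bar> \<le> M) \<Longrightarrow> a \<in> linfty"
  unfolding linfty_def by blast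

lemma abs_le_if_abs_mult_le:
  fixes n c B :: int
  assumes "0 < n" and "\<bar>n * c\<bar> \<le> B"
  shows "\<bar>c\<bar> \<le> B"
proof -
  have "\<bar>c\<bar> \<le> \<bar>n * c\<bar>"
    using assms(1) by (simp add: abs_mult mult_le_cancel_right1)
  with assms(2) show ?thesis by linarith
qed

lemma shift_invariant_imp_const:
  fixes f :: "int \<Rightarrow> 'a"
  assumes "\<And>j. f (j + 1) = f j"
  shows "f i = f 0"
proof (induction i rule: int_induct[where k = 0])
  case (step2 i)
  then show ?case using assms[of "i - 1"] by simp
qed (use assms in simp_all)

lemma exists_difference_primitive:
  fixes x :: "int \<Rightarrow> 'a::ab_group_add"
  shows "\<exists>P. \<forall>j. P j - P (j + 1) = x j"
proof -
  define P where "P j = (\<Sum>i\<in>{j..<0}. x i) - (\<Sum>i\<in>{0..<j}. x i)" for j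
  have "P j - P (j + 1) = x j" for j
  proof (cases "j \<ge> 0")
    case True
    then have "{j..<0} = {}" "{j + 1..<0} = {}" "{0..<j + 1} = insert j {0..<j}" by auto
    then show ?thesis unfolding P_def by simp
  next
    case False
    then have "{0..<j} = {}" "{0..<j + 1} = {}" "{j..<0} = insert j {j + 1..<0}" by auto
    then show ?thesis unfolding P_def by simp
  qed
  then show ?thesis by blast
qed

lemma coinv_divisible:
  assumes "0 < n" and "x \<in> linfty"
  shows "\<exists>y\<in>linfty. coinv_eq x (\<lambda>j. n * y j)"
proof -
  obtain M where M: "\<And>j. \<bar>x j\<bar> \<le> M" using assms(2) unfolding linfty_def by blast
  obtain P where P: "\<And>j. P j - P (j + 1) = x j" using exists_difference_primitive by blast
  define y where "y j = P j div n - P (j + 1) div n" for j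
  define r where "r j = P j mod n" for j
  have r_bounds: "0 \<le> r j \<and> r j < n" for j
    unfolding r_def using assms(1) by simp
  have x_eq: "x j - n * y j = r j - r (j + 1)" for j
    using P[of j] div_mult_mod_eq[of "P j" n] div_mult_mod_eq[of "P (j + 1)" n]
    unfolding r_def y_def by (simp add: algebra_simps)
  have "\<bar>n * y j\<bar> \<le> M + n" for j
    using x_eq[of j] M[of j] r_bounds[of j] r_bounds[of "j + 1"] by linarith
  then have "y \<in> linfty"
    using abs_le_if_abs_mult_le[OF assms(1)] by (intro linfty_if_abs_le) blast
  moreover have "r \<in> linfty"
    using r_bounds by (intro linfty_if_abs_le[of _ n]) (simp add: abs_of_nonneg less_imp_le)
  ultimately show ?thesis
    using x_eq unfolding coinv_eq_iff by blast
qed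

lemma coinv_mult_cancel:
  assumes "0 < n" and "coinv_eq (\<lambda>j. n * y j) (\<lambda>j. n * z j)"
  shows "coinv_eq y z"
proof -
  obtain b where "b \<in> linfty" and b: "\<And>j. n * y j - n * z j = b j - b (j + 1)"
    using assms(2) unfolding coinv_eq_iff by blast
  then obtain M where M: "\<And>j. \<bar>b j\<bar> \<le> M" unfolding linfty_def by blast
  have "b (j + 1) mod n = b j mod n" for j
  proof -
    have "b j = b (j + 1) + (y j - z j) * n" using b[of j] by (simp add: algebra_simps)
    then show ?thesis by simp
  qed
  then have "b j mod n = b 0 mod n" for j
    by (rule shift_invariant_imp_const)
  then have "n dvd b j - b 0" for j
    by (simp add: mod_eq_dvd_iff)
  then obtain c where c: "\<And>j. b j - b 0 = n * c j"
    unfolding dvd_def by metis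
  have "n * (y j - z j) = n * (c j - c (j + 1))" for j
    using b[of j] c[of j] c[of "j + 1"] by (simp add: algebra_simps)
  then have "y j - z j = c j - c (j + 1)" for j
    using assms(1) by simp
  moreover have "\<bar>c j\<bar> \<le> 2 * M" for j
  proof -
    have "\<bar>n * c j\<bar> \<le> 2 * M" using c[of j] M[of j] M[of 0] by linarith
    then show ?thesis using abs_le_if_abs_mult_le[OF assms(1)] by blast
  qed
  then have "c \<in> linfty" by (rule linfty_if_abs_le)
  ultimately show ?thesis
    unfolding coinv_eq_iff by blast
qed

theorem proposition5p3:
  shows "coinv_uniquely_divisible"
  unfolding coinv_uniquely_divisible_def
  using coinv_divisible coinv_mult_cancel of_nat_0_less_iff by blast

end
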